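(* For every $n\ge3$, every maximally even set of vertices of $C_n$ is a maximizer of $W$ on $C_n$. However, the converse fails: there exist $n$ and sets of vertices of $C_n$ that are maximizers of $W$ but are not maximally even.
   Context: $C_n$ has vertex set $\{0,\dots,n-1\}$ with $i$ adjacent to $i+1\bmod n$; $d$ is geodesic distance and $d^*(u,v)$ the least non-negative integer congruent to $v-u$ mod $n$. $W(A)=\sum_{\{u,v\}\subseteq A,u\ne v}d(u,v)$; $A$ is a maximizer of $W$ if $W(A)=\max\{W(B):|B|=|A|\}$. For $A=\{a_0<\dots<a_{m-1}\}$, $\mathrm{span}_A(a_i,a_j)$ is the least positive integer congruent to $j-i$ mod $m$, and $\sigma^*_k(A)=[\,d^*(u,v):u,v\in A,u\ne v,\mathrm{span}_A(u,v)=k\,]$. $A$ is maximally even if for each $1\le k\le m-1$ the set of values of $\sigma^*_k(A)$ is one integer or two consecutive integers. *)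

theory Defs
  imports Main "HOL-Number_Theory.Cong"
begin

text \<open>Cycle C_n: vertices 0..n-1 (natural numbers below n), i adjacent to i+1 mod n.\<close>

definition dstar :: "nat \<Rightarrow> nat \<Rightarrow> nat \<Rightarrow> nat" where
  "dstar n u v = nat ((int v - int u) mod int n)"

definition cdist :: "nat \<Rightarrow> nat \<Rightarrow> nat \<Rightarrow> nat" where
  "cdist n u v = min (dstar n u v) (dstar n v u)"

definition W :: "nat \<Rightarrow> nat set \<Rightarrow> nat" where
  "W n A = (\<Sum>p\<in>{(u, v). u \<in> A \<and> v \<in> A \<and> u < v}. cdist n (fst p) (snd p))"

definition is_maximizer :: "nat \<Rightarrow> nat set \<Rightarrow> bool" where
  "is_maximizer n A \<longleftrightarrow> A \<subseteq> {0..<n} \<and>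
     (\<forall>B. B \<subseteq> {0..<n} \<and> card B = card A \<longrightarrow> W n B \<le> W n A)"

definition idx :: "nat set \<Rightarrow> nat \<Rightarrow> nat" where
  "idx A u = card {x \<in> A. x < u}"

definition span :: "nat set \<Rightarrow> nat \<Rightarrow> nat \<Rightarrow> nat" where
  "span A u v = (LEAST k::nat. 0 < k \<and>
      [int k = int (idx A v) - int (idx A u)] (mod int (card A)))"

text \<open>Set of values of the multiset sigma*_k(A).\<close>
definition sigma_vals :: "nat \<Rightarrow> nat set \<Rightarrow> nat \<Rightarrow> nat set" where
  "sigma_vals n A k = {dstar n u v | u v. u \<in> A \<and> v \<in> A \<and> u \<noteq> v \<and> span A u v = k}"

definition maximally_even :: "nat \<Rightarrow> nat set \<Rightarrow> bool" where
  "maximally_even n A \<longleftrightarrow> A \<subseteq> {0..<n} \<and>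
     (\<forall>k. 1 \<le> k \<and> k \<le> card A - 1 \<longrightarrow>
        (\<exists>c. sigma_vals n A k = {c} \<or> sigma_vals n A k = {c, c + 1}))"

end

theory Submission
  imports Defs
begin

text \<open>List \<open>A\<close> as \<open>a\<^sub>0 < \<dots> < a\<^sub>m\<^sub>-\<^sub>1\<close>. Each ordered pair of distinct elements is
  \<open>(a\<^sub>i, a\<^sub>i\<^sub>+\<^sub>k)\<close> (indices mod \<open>m\<close>) for exactly one \<open>i < m\<close> and \<open>0 < k < m\<close>, and it then has
  span \<open>k\<close>. For fixed \<open>k\<close> the gaps \<open>x\<^sub>i = d\<^sup>*(a\<^sub>i, a\<^sub>i\<^sub>+\<^sub>k)\<close> sum to \<open>k n\<close>, because going once
  around \<open>A\<close> in steps of \<open>k\<close> winds \<open>k\<close> times around the cycle, and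
  \<open>d(a\<^sub>i, a\<^sub>i\<^sub>+\<^sub>k) = min x\<^sub>i (n - x\<^sub>i)\<close> is concave in \<open>x\<^sub>i\<close>. So the \<open>k\<close>-th part of \<open>2 W(A)\<close> is at
  most its value when \<open>k n\<close> is spread as evenly as possible over \<open>m\<close> integers. This bound
  depends only on \<open>n\<close> and \<open>m\<close>, and it is attained when all \<open>x\<^sub>i\<close> lie in two consecutive
  integers, which is what maximal evenness says. The converse fails for \<open>{0, 1, 3}\<close> in \<open>C\<^sub>6\<close>:
  its span-1 gaps \<open>1, 2, 3\<close> are not even, but \<open>min x (6 - x)\<close> is affine on either side of
  \<open>3\<close>, so nothing is lost to concavity.\<close>

lemma dstar_eq:
  assumes "u < n" "v < n"
  shows "int (dstar n u v) = (if u \<le> v then int v - int u else int v - int u + int n)"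
proof (cases "u \<le> v")
  case True
  then have "(int v - int u) mod int n = int v - int u"
    using assms by (intro mod_pos_pos_trivial) auto
  then show ?thesis using True unfolding dstar_def by simp
next
  case False
  have "(int v - int u) mod int n = (int v - int u + int n) mod int n" by simp
  also have "\<dots> = int v - int u + int n"
    using assms False by (intro mod_pos_pos_trivial) auto
  finally show ?thesis using assms False unfolding dstar_def by simp
qed

definition cycle_norm :: "nat \<Rightarrow> int \<Rightarrow> int" where
  "cycle_norm n x = min x (int n - x)"

lemma cdist_eq_cycle_norm:
  assumes "0 < n"
  shows "int (cdist n u v) = cycle_norm n (int (dstar n u v))"
proof -
  let ?d = "(int v - int u) mod int n"
  have d: "int (dstar n u v) = ?d"
    using assms by (simp add: dstar_def)
  have "int (dstar n v u) = (- (int v - int u)) mod int n"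
    using assms by (simp add: dstar_def)
  also have "\<dots> = (if ?d = 0 then 0 else int n - ?d)"
    by (rule zmod_zminus1_eq_if)
  finally show ?thesis
    using d assms unfolding cdist_def cycle_norm_def by (auto simp: min_def split: if_splits)
qed

subsection \<open>Concavity of the cycle norm\<close>

definition secant :: "nat \<Rightarrow> int \<Rightarrow> int \<Rightarrow> int" where
  "secant n q x = cycle_norm n q + (cycle_norm n (q + 1) - cycle_norm n q) * (x - q)"

lemma cycle_norm_le_secant: "cycle_norm n x \<le> secant n q x"
proof -
  have "2 * (q + 1) \<le> int n \<or> int n \<le> 2 * q \<or> int n = 2 * q + 1" by auto
  then show ?thesis
    by (auto simp: secant_def cycle_norm_def)
qed

lemma cycle_norm_eq_secant: "x = q \<or> x = q + 1 \<Longrightarrow> cycle_norm n x = secant n q x"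
  by (auto simp: secant_def)

lemma sum_secant:
  "(\<Sum>i\<in>I. secant n q (x i)) = int (card I) * cycle_norm n q
     + (cycle_norm n (q + 1) - cycle_norm n q) * ((\<Sum>i\<in>I. x i) - int (card I) * q)"
  by (simp add: secant_def sum.distrib sum_distrib_left sum_subtractf right_diff_distrib)

text \<open>The value of \<open>\<Sum>cycle_norm n x\<^sub>i\<close> when \<open>m\<close> integers with sum \<open>S\<close> all lie in
  \<open>{q, q + 1}\<close>, \<open>q = S div m\<close>; by concavity it is the largest value for any \<open>m\<close> integers
  with sum \<open>S\<close>.\<close>

definition balanced_norm_sum :: "nat \<Rightarrow> nat \<Rightarrow> int \<Rightarrow> int" where
  "balanced_norm_sum n m S = (let q = S div int m in
     int m * cycle_norm n q + (cycle_norm n (q + 1) - cycle_norm n q) * (S - int m * q))"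

lemma sum_cycle_norm_le_balanced:
  "(\<Sum>i\<in>I. cycle_norm n (x i)) \<le> balanced_norm_sum n (card I) (\<Sum>i\<in>I. x i)"
proof -
  let ?q = "(\<Sum>i\<in>I. x i) div int (card I)"
  have "(\<Sum>i\<in>I. cycle_norm n (x i)) \<le> (\<Sum>i\<in>I. secant n ?q (x i))"
    by (intro sum_mono cycle_norm_le_secant)
  then show ?thesis
    unfolding sum_secant balanced_norm_sum_def Let_def .
qed

lemma two_consecutive_values_floor_mean:
  fixes x :: "'a \<Rightarrow> int"
  assumes "finite I" and x: "\<And>i. i \<in> I \<Longrightarrow> x i = c \<or> x i = c + 1" and "i \<in> I"
  defines "q \<equiv> (\<Sum>i\<in>I. x i) div int (card I)"
  shows "x i = q \<or> x i = q + 1"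
proof -
  let ?S = "\<Sum>i\<in>I. x i"
  have m: "0 < int (card I)" using assms card_gt_0_iff by auto
  have lower: "int (card I) * c \<le> ?S"
    using sum_mono[of I "\<lambda>_. c" x] x by fastforce
  show ?thesis
  proof (cases "\<exists>j\<in>I. x j = c")
    case True
    then obtain j where j: "j \<in> I" "x j = c" by blast
    have "?S = x j + (\<Sum>i\<in>I - {j}. x i)"
      using j \<open>finite I\<close> by (simp add: sum.remove)
    also have "\<dots> \<le> c + (\<Sum>i\<in>I - {j}. c + 1)"
      using j x by (intro add_mono sum_mono) force+
    also have "\<dots> < int (card I) * (c + 1)"
      using j \<open>finite I\<close> m by (simp add: algebra_simps)
    finally have "?S - int (card I) * c < int (card I)" by (simp add: algebra_simps)
    have "?S div int (card I) = (?S - int (card I) * c + c * int (card I)) div int (card I)"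
      by (simp add: mult.commute)
    also have "\<dots> = c + (?S - int (card I) * c) div int (card I)"
      by (rule div_mult_self1) (use m in simp)
    also have "(?S - int (card I) * c) div int (card I) = 0"
      using lower \<open>?S - int (card I) * c < int (card I)\<close>
      by (intro div_pos_pos_trivial) auto
    finally show ?thesis using x[OF \<open>i \<in> I\<close>] unfolding q_def by auto
  next
    case False
    then have "\<And>i. i \<in> I \<Longrightarrow> x i = c + 1" using x by blast
    then have "?S = int (card I) * (c + 1)" by simp
    then have "q = c + 1" unfolding q_def using m by simp
    then show ?thesis using \<open>\<And>i. i \<in> I \<Longrightarrow> x i = c + 1\<close> \<open>i \<in> I\<close> by simp
  qed
qed

lemma sum_cycle_norm_eq_balanced:
  assumes "finite I" and "\<And>i. i \<in> I \<Longrightarrow> x i = c \<or> x i = c + 1"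
  shows "(\<Sum>i\<in>I. cycle_norm n (x i)) = balanced_norm_sum n (card I) (\<Sum>i\<in>I. x i)"
proof -
  let ?q = "(\<Sum>i\<in>I. x i) div int (card I)"
  have "(\<Sum>i\<in>I. cycle_norm n (x i)) = (\<Sum>i\<in>I. secant n ?q (x i))"
    by (intro sum.cong refl cycle_norm_eq_secant two_consecutive_values_floor_mean[OF assms])
  then show ?thesis
    unfolding sum_secant balanced_norm_sum_def Let_def .
qed

subsection \<open>Pairs of a set, grouped by span\<close>

lemma sum_distinct_pairs_sym:
  fixes f :: "'a::linorder \<Rightarrow> 'a \<Rightarrow> 'b::comm_semiring_1"
  assumes "finite A" and sym: "\<And>u v. f u v = f v u"
  shows "(\<Sum>p\<in>{(u, v). u \<in> A \<and> v \<in> A \<and> u \<noteq> v}. f (fst p) (snd p))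
       = 2 * (\<Sum>p\<in>{(u, v). u \<in> A \<and> v \<in> A \<and> u < v}. f (fst p) (snd p))"
proof -
  define L where "L = {(u, v). u \<in> A \<and> v \<in> A \<and> u < v}"
  have split: "{(u, v). u \<in> A \<and> v \<in> A \<and> u \<noteq> v} = L \<union> prod.swap ` L"
    unfolding L_def by auto
  have "finite L"
    using \<open>finite A\<close> by (auto simp: L_def intro: finite_subset[of _ "A \<times> A"])
  moreover have "L \<inter> prod.swap ` L = {}" unfolding L_def by auto
  moreover have "(\<Sum>p\<in>prod.swap ` L. f (fst p) (snd p)) = (\<Sum>p\<in>L. f (fst p) (snd p))"
    by (subst sum.reindex) (auto simp: sym)
  ultimately show ?thesis
    unfolding split by (simp add: sum.union_disjoint mult_2 flip: L_def)
qed

lemma bij_betw_add_mod: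
  assumes "0 < m"
  shows "bij_betw (\<lambda>i. (i + k) mod m) {..<m} {..<m::nat}"
proof -
  have "inj_on (\<lambda>i. (i + k) mod m) {..<m}"
    by (auto simp: inj_on_def cong_def[symmetric] cong_add_rcancel_nat
        cong_less_modulus_unique_nat)
  moreover have "(\<lambda>i. (i + k) mod m) ` {..<m} \<subseteq> {..<m}" using assms by auto
  ultimately show ?thesis
    using endo_inj_surj[of "{..<m}"] by (auto simp: bij_betw_def)
qed

locale cycle_subset =
  fixes n :: nat and A :: "nat set"
  assumes subset: "A \<subseteq> {0..<n}"
begin

abbreviation m :: nat where "m \<equiv> card A"

definition elem :: "nat \<Rightarrow> nat" where
  "elem i = sorted_list_of_set A ! i"

definition gap :: "nat \<Rightarrow> nat \<Rightarrow> nat" where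
  "gap k i = dstar n (elem i) (elem ((i + k) mod m))"

lemma finite_A: "finite A"
  using subset finite_subset by blast

lemma elem_less_elem_iff: "i < m \<Longrightarrow> j < m \<Longrightarrow> elem i < elem j \<longleftrightarrow> i < j"
  using strict_sorted_list_of_set[of A] finite_A
  by (metis elem_def length_sorted_list_of_set sorted_wrt_nth_less not_less_iff_gr_or_eq)

lemma inj_on_elem: "inj_on elem {..<m}"
  by (rule inj_onI) (metis elem_less_elem_iff lessThan_iff not_less_iff_gr_or_eq)

lemma elem_image: "elem ` {..<m} = A"
  using finite_A unfolding elem_def
  by (metis image_set length_sorted_list_of_set map_nth set_sorted_list_of_set
      set_upt lessThan_atLeast0)

lemma elem_in: "i < m \<Longrightarrow> elem i \<in> A"
  using elem_image by blast

lemma elem_less: "i < m \<Longrightarrow> elem i < n"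
  using elem_in subset by (meson atLeastLessThan_iff subsetD)

lemma idx_elem:
  assumes "i < m"
  shows "idx A (elem i) = i"
proof -
  have "{x \<in> A. x < elem i} = elem ` {..<i}"
  proof
    show "{x \<in> A. x < elem i} \<subseteq> elem ` {..<i}"
    proof clarify
      fix x assume "x \<in> A" "x < elem i"
      then obtain j where "j < m" "x = elem j" using elem_image by auto
      then show "x \<in> elem ` {..<i}" using assms elem_less_elem_iff \<open>x < elem i\<close> by auto
    qed
    show "elem ` {..<i} \<subseteq> {x \<in> A. x < elem i}"
      using assms elem_less_elem_iff elem_in by auto
  qed
  moreover have "inj_on elem {..<i}"
    using inj_on_elem by (rule inj_on_subset) (use assms in auto)
  ultimately show ?thesis unfolding idx_def by (simp add: card_image)
qed

lemma span_elem:
  assumes "i < m" "0 < k" "k < m"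
  shows "span A (elem i) (elem ((i + k) mod m)) = k"
proof -
  have j: "(i + k) mod m < m" using assms by simp
  have "[int ((i + k) mod m) - int i = int k] (mod int m)"
    by (simp add: cong_def zmod_int mod_diff_left_eq)
  then have cong: "[int l = int ((i + k) mod m) - int i] (mod int m) \<longleftrightarrow> [l = k] (mod m)" for l
    by (metis cong_int_iff cong_sym cong_trans)
  show ?thesis
    unfolding span_def idx_elem[OF assms(1)] idx_elem[OF j] cong
  proof (rule Least_equality)
    fix l assume "0 < l \<and> [l = k] (mod m)"
    then show "k \<le> l"
      using assms cong_less_modulus_unique_nat[of l k m] by fastforce
  qed (use assms in simp)
qed

lemma elem_shift_ne:
  assumes "i < m" "0 < k" "k < m"
  shows "elem ((i + k) mod m) \<noteq> elem i"
proof
  assume "elem ((i + k) mod m) = elem i"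
  then have "(i + k) mod m = i mod m"
    using assms inj_on_elem by (auto dest: inj_onD)
  then have "[k = 0] (mod m)"
    by (metis add.right_neutral cong_add_lcancel_nat cong_def)
  then show False
    using assms cong_less_modulus_unique_nat by fastforce
qed

lemma gap_in_sigma_vals:
  assumes "i < m" "0 < k" "k < m"
  shows "gap k i \<in> sigma_vals n A k"
proof -
  have "elem i \<in> A" "elem ((i + k) mod m) \<in> A"
    using assms elem_in by auto
  moreover have "elem i \<noteq> elem ((i + k) mod m)"
    using elem_shift_ne[OF assms] by simp
  ultimately show ?thesis
    unfolding sigma_vals_def gap_def using span_elem[OF assms] by blast
qed

lemma int_gap:
  assumes "i < m" "0 < k" "k < m"
  shows "int (gap k i)
    = int (elem ((i + k) mod m)) - int (elem i) + (if m \<le> i + k then int n else 0)"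
proof -
  have j: "(i + k) mod m < m" using assms by simp
  have "i \<le> (i + k) mod m \<longleftrightarrow> \<not> m \<le> i + k"
  proof (cases "m \<le> i + k")
    case True
    then have "(i + k) mod m = i + k - m"
      using assms by (simp add: le_mod_geq)
    then show ?thesis using True assms by simp
  qed simp
  then have "elem i \<le> elem ((i + k) mod m) \<longleftrightarrow> \<not> m \<le> i + k"
    using elem_less_elem_iff[OF j assms(1)] by linarith
  then show ?thesis
    unfolding gap_def dstar_eq[OF elem_less[OF assms(1)] elem_less[OF j]] by simp
qed

lemma sum_gap:
  assumes "0 < k" "k < m"
  shows "(\<Sum>i<m. int (gap k i)) = int (k * n)"
proof -
  have "(\<Sum>i<m. int (gap k i)) = (\<Sum>i<m. int (elem ((i + k) mod m))) - (\<Sum>i<m. int (elem i))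
        + (\<Sum>i<m. if m \<le> i + k then int n else 0)"
    using int_gap assms by (simp add: sum.distrib sum_subtractf)
  also have "(\<Sum>i<m. int (elem ((i + k) mod m))) = (\<Sum>i<m. int (elem i))"
    using sum.reindex_bij_betw[OF bij_betw_add_mod[of m k], of "\<lambda>i. int (elem i)"] assms by simp
  also have "(\<Sum>i<m. if m \<le> i + k then int n else 0) = int n * int (card ({..<m} \<inter> {i. m \<le> i + k}))"
    by (simp add: sum.If_cases)
  also have "{..<m} \<inter> {i. m \<le> i + k} = {m - k..<m}"
    using assms by auto
  finally show ?thesis using assms by simp
qed

lemma span_pair_inj:
  assumes "k < m" "k' < m" "i < m" "i' < m"
    and "elem i = elem i'" "elem ((i + k) mod m) = elem ((i' + k') mod m)"
  shows "k = k' \<and> i = i'"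
proof -
  have "i = i'" using assms inj_on_elem by (auto dest: inj_onD)
  then have "(i + k) mod m = (i + k') mod m"
    using assms inj_on_elem by (auto dest: inj_onD)
  then show ?thesis
    using \<open>i = i'\<close> \<open>k < m\<close> \<open>k' < m\<close>
    by (metis cong_add_lcancel_nat cong_def cong_less_modulus_unique_nat)
qed

lemma distinct_pair_eq_span_pair:
  assumes "u \<in> A" "v \<in> A" "u \<noteq> v"
  obtains k i where "0 < k" "k < m" "i < m" "u = elem i" "v = elem ((i + k) mod m)"
proof -
  obtain i j where ij: "i < m" "j < m" "u = elem i" "v = elem j"
    using assms elem_image by (metis imageE lessThan_iff)
  define k where "k = (j + m - i) mod m"
  have "(i + k) mod m = (j + m) mod m"
    using ij unfolding k_def by (simp add: mod_add_right_eq)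
  then have j: "(i + k) mod m = j" using ij by simp
  moreover have "k \<noteq> 0"
  proof
    assume "k = 0"
    then show False using j ij \<open>u \<noteq> v\<close> by simp
  qed
  moreover have "k < m" unfolding k_def using ij by simp
  ultimately show ?thesis using that ij by blast
qed

lemma bij_betw_span_pairs:
  "bij_betw (\<lambda>(k, i). (elem i, elem ((i + k) mod m)))
     ({1..<m} \<times> {..<m}) {(u, v). u \<in> A \<and> v \<in> A \<and> u \<noteq> v}"
proof (rule bij_betw_imageI)
  show "inj_on (\<lambda>(k, i). (elem i, elem ((i + k) mod m))) ({1..<m} \<times> {..<m})"
    using span_pair_inj by (auto simp: inj_on_def)
  show "(\<lambda>(k, i). (elem i, elem ((i + k) mod m))) ` ({1..<m} \<times> {..<m})
      = {(u, v). u \<in> A \<and> v \<in> A \<and> u \<noteq> v}"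
  proof (intro equalityI subsetI)
    fix p assume "p \<in> (\<lambda>(k, i). (elem i, elem ((i + k) mod m))) ` ({1..<m} \<times> {..<m})"
    then obtain k i where "p = (elem i, elem ((i + k) mod m))" "0 < k" "k < m" "i < m"
      by force
    then show "p \<in> {(u, v). u \<in> A \<and> v \<in> A \<and> u \<noteq> v}"
      using elem_in elem_shift_ne[of i k] by auto
  next
    fix p assume "p \<in> {(u, v). u \<in> A \<and> v \<in> A \<and> u \<noteq> v}"
    then obtain k i where "0 < k" "k < m" "i < m" "p = (elem i, elem ((i + k) mod m))"
      by (auto elim: distinct_pair_eq_span_pair)
    then show "p \<in> (\<lambda>(k, i). (elem i, elem ((i + k) mod m))) ` ({1..<m} \<times> {..<m})"
      by force
  qed
qed

lemma twice_W_eq_sum_cycle_norm: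
  assumes "0 < n"
  shows "2 * int (W n A) = (\<Sum>k\<in>{1..<m}. \<Sum>i<m. cycle_norm n (int (gap k i)))"
proof -
  have "2 * W n A = (\<Sum>p\<in>{(u, v). u \<in> A \<and> v \<in> A \<and> u \<noteq> v}. cdist n (fst p) (snd p))"
    unfolding W_def
    by (rule sum_distinct_pairs_sym[symmetric]) (use finite_A in \<open>auto simp: cdist_def\<close>)
  also have "\<dots> = (\<Sum>(k, i)\<in>{1..<m} \<times> {..<m}. cdist n (elem i) (elem ((i + k) mod m)))"
    using sum.reindex_bij_betw[OF bij_betw_span_pairs, of "\<lambda>p. cdist n (fst p) (snd p)"]
    by (simp add: case_prod_beta)
  finally have "2 * int (W n A) = (\<Sum>k\<in>{1..<m}. \<Sum>i<m. int (cdist n (elem i) (elem ((i + k) mod m))))"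
    by (simp add: sum.cartesian_product flip: of_nat_sum)
  then show ?thesis
    unfolding gap_def cdist_eq_cycle_norm[OF assms] .
qed

lemma twice_W_le:
  assumes "0 < n"
  shows "2 * int (W n A) \<le> (\<Sum>k\<in>{1..<m}. balanced_norm_sum n m (int (k * n)))"
  unfolding twice_W_eq_sum_cycle_norm[OF assms]
proof (rule sum_mono)
  fix k assume "k \<in> {1..<m}"
  then show "(\<Sum>i<m. cycle_norm n (int (gap k i))) \<le> balanced_norm_sum n m (int (k * n))"
    using sum_cycle_norm_le_balanced[of n "\<lambda>i. int (gap k i)" "{..<m}"] sum_gap by simp
qed

lemma twice_W_eq_if_maximally_even:
  assumes "0 < n" and "maximally_even n A"
  shows "2 * int (W n A) = (\<Sum>k\<in>{1..<m}. balanced_norm_sum n m (int (k * n)))"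
  unfolding twice_W_eq_sum_cycle_norm[OF assms(1)]
proof (rule sum.cong)
  fix k assume k: "k \<in> {1..<m}"
  then obtain c where "sigma_vals n A k = {c} \<or> sigma_vals n A k = {c, c + 1}"
    using assms(2) unfolding maximally_even_def by force
  then have "int (gap k i) = int c \<or> int (gap k i) = int c + 1" if "i \<in> {..<m}" for i
    using gap_in_sigma_vals[of i k] that k by fastforce
  then show "(\<Sum>i<m. cycle_norm n (int (gap k i))) = balanced_norm_sum n m (int (k * n))"
    using sum_cycle_norm_eq_balanced[of "{..<m}" "\<lambda>i. int (gap k i)" "int c" n] sum_gap k
    by simp
qed simp

end

theorem maximally_even_imp_is_maximizer:
  assumes "0 < n" and "maximally_even n A"
  shows "is_maximizer n A"
proof -
  have A: "A \<subseteq> {0..<n}" using assms(2) unfolding maximally_even_def by blast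
  interpret A: cycle_subset n A by unfold_locales (fact A)
  have "W n B \<le> W n A" if "B \<subseteq> {0..<n}" "card B = card A" for B
  proof -
    interpret B: cycle_subset n B by unfold_locales (fact that(1))
    show ?thesis
      using B.twice_W_le A.twice_W_eq_if_maximally_even assms that(2) by simp
  qed
  then show ?thesis
    unfolding is_maximizer_def using A by blast
qed

lemma not_maximally_even_013: "\<not> maximally_even 6 {0, 1, 3}"
proof
  assume "maximally_even 6 {0, 1, 3}"
  then obtain c where c: "sigma_vals 6 {0, 1, 3} 1 = {c} \<or> sigma_vals 6 {0, 1, 3} 1 = {c, c + 1}"
    unfolding maximally_even_def by force
  interpret cycle_subset 6 "{0, 1, 3}" by unfold_locales auto
  have "gap 1 0 \<in> sigma_vals 6 {0, 1, 3} 1" "gap 1 2 \<in> sigma_vals 6 {0, 1, 3} 1"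
    by (intro gap_in_sigma_vals; simp)+
  moreover have "gap 1 0 = 1" "gap 1 2 = 3"
    unfolding gap_def elem_def dstar_def by simp_all
  ultimately show False using c by auto
qed

lemma is_maximizer_013: "is_maximizer 6 {0, 1, 3}"
  unfolding is_maximizer_def
proof (intro conjI allI impI)
  fix B :: "nat set" assume B: "B \<subseteq> {0..<6} \<and> card B = card {0::nat, 1, 3}"
  interpret cycle_subset 6 B by unfold_locales (use B in blast)
  have "card B = 3" using B by simp
  moreover have "2 * int (W 6 B) \<le> (\<Sum>k\<in>{1..<m}. balanced_norm_sum 6 m (int (k * 6)))"
    by (rule twice_W_le) simp
  ultimately have "2 * int (W 6 B) \<le> (\<Sum>k\<in>{1..<3}. balanced_norm_sum 6 3 (int (k * 6)))"
    by (simp only:)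
  also have "\<dots> = 2 * int (W 6 {0, 1, 3})"
  proof -
    have "{(u, v). u \<in> {0::nat, 1, 3} \<and> v \<in> {0, 1, 3} \<and> u < v} = {(0, 1), (0, 3), (1, 3)}"
      by auto
    moreover have "{1..<3::nat} = {1, 2}" by auto
    ultimately show ?thesis
      by (simp add: W_def cdist_def dstar_def balanced_norm_sum_def cycle_norm_def)
  qed
  finally show "W 6 B \<le> W 6 {0, 1, 3}" by simp
qed auto

theorem mainTheorem15:
  shows "(\<forall>n\<ge>3. \<forall>A. A \<subseteq> {0..<n} \<and> maximally_even n A \<longrightarrow> is_maximizer n A)
       \<and> (\<exists>n\<ge>3. \<exists>A. A \<subseteq> {0..<n} \<and> is_maximizer n A \<and> \<not> maximally_even n A)"
proof
  show "\<forall>n\<ge>3. \<forall>A. A \<subseteq> {0..<n} \<and> maximally_even n A \<longrightarrow> is_maximizer n A"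
    using maximally_even_imp_is_maximizer by simp
  show "\<exists>n\<ge>3. \<exists>A. A \<subseteq> {0..<n} \<and> is_maximizer n A \<and> \<not> maximally_even n A"
    using is_maximizer_013 not_maximally_even_013
    by (intro exI[of _ 6] conjI exI[of _ "{0, 1, 3}"]) auto
qed

end
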